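(* Let $p,q$ be positive integers with $p/q\ge4$, $k=\lfloor p/q\rfloor$, $r=p-kq\ge1$, and $t$ the smallest positive integer with $(t+1)q\equiv r\pmod p$. Let $G$ be a graph and $f,g$ two $k$-colourings of $G$ with colours $\{0,\dots,k-1\}$, and let $(G',\alpha,\beta)$ be constructed from $(G,f,g)$ as described in the context. If $\alpha$ reconfigures to $\beta$ (as $(p,q)$-colourings of $G'$), then $f$ reconfigures to $g$ (as $k$-colourings of $G$).
   Context: Intervals $[a,b]=\{a,a+1,\dots,b\}$ are taken modulo $p$. A $(p,q)$-colouring is a map to $\{0,\dots,p-1\}$ with $q\le|\psi(x)-\psi(y)|\le p-q$ on every edge; a $k$-colouring is a proper colouring with colours $\{0,\dots,k-1\}$; in either setting, $a$ reconfigures to $b$ if there is a sequence of such colourings from $a$ to $b$ with consecutive ones differing on at most one vertex. Let $\gamma(0)=0$ and $\gamma(i)=iq+r$ for $1\le i\le k-1$. Construction of $G'$: start from $G$; add a disjoint copy of the circular clique on vertices $y_0,\dots,y_{p-1}$ ($y_iy_j$ an edge iff $q\le|i-j|\le p-q$); for every edge $uv$ of $G$ add two new paths $P_{uv}=u\,x_0^{uv}\cdots x_t^{uv}\,v$ and $P_{vu}=v\,x_0^{vu}\cdots x_t^{vu}\,u$, internally disjoint from everything else and each other; join $x_0^{ab}$ and $x_t^{ab}$ to all $y_j$ with $j\in[3q-1,p-q-1]$, and join $x_i^{ab}$ ($1\le i\le t-1$) to all $y_j$ with $j\in[(i+3)q-1,(i-1)q]$. Colouring $\alpha$: $\alpha(w)=\gamma(f(w))$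 for $w\in V(G)$; $\alpha(y_i)=i$; for each path $P_{ab}$ (over both orderings of each edge of $G$): if $\alpha(a)=0$, set $\alpha(x_i^{ab})=(i+1)q\bmod p$ for $0\le i\le t$; if $\alpha(b)=0$, set $\alpha(x_i^{ab})=iq\bmod p$ for $0\le i\le t-1$ and $\alpha(x_t^{ab})=q$; if $\alpha(a)\ne0\ne\alpha(b)$, set $\alpha(x_i^{ab})=iq\bmod p$ for $0\le i\le t-1$ and $\alpha(x_t^{ab})=0$. The colouring $\beta$ is defined in the same way from $g$. *)

theory Defs
  imports Main
begin

definition graph :: "'v set \<Rightarrow> ('v \<Rightarrow> 'v \<Rightarrow> bool) \<Rightarrow> bool" where
  "graph V E \<longleftrightarrow> finite V \<and> (\<forall>u v. E u v \<longrightarrow> u \<in> V \<and> v \<in> V)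
     \<and> (\<forall>u v. E u v \<longrightarrow> E v u) \<and> (\<forall>v. \<not> E v v)"

definition k_col :: "nat \<Rightarrow> 'v set \<Rightarrow> ('v \<Rightarrow> 'v \<Rightarrow> bool) \<Rightarrow> ('v \<Rightarrow> nat) \<Rightarrow> bool" where
  "k_col k V E c \<longleftrightarrow> (\<forall>v\<in>V. c v < k) \<and> (\<forall>u\<in>V. \<forall>v\<in>V. E u v \<longrightarrow> c u \<noteq> c v)"

definition pq_col :: "nat \<Rightarrow> nat \<Rightarrow> 'v set \<Rightarrow> ('v \<Rightarrow> 'v \<Rightarrow> bool) \<Rightarrow> ('v \<Rightarrow> nat) \<Rightarrow> bool" where
  "pq_col p q V E c \<longleftrightarrow> (\<forall>v\<in>V. c v < p) \<and>
     (\<forall>u\<in>V. \<forall>v\<in>V. E u v \<longrightarrow>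
        int q \<le> \<bar>int (c u) - int (c v)\<bar> \<and> \<bar>int (c u) - int (c v)\<bar> \<le> int p - int q)"

definition reconf_step :: "(('v \<Rightarrow> nat) \<Rightarrow> bool) \<Rightarrow> 'v set \<Rightarrow> ('v \<Rightarrow> nat) \<Rightarrow> ('v \<Rightarrow> nat) \<Rightarrow> bool" where
  "reconf_step P V c d \<longleftrightarrow> P c \<and> P d \<and> (\<exists>w. \<forall>v\<in>V. v \<noteq> w \<longrightarrow> c v = d v)"

definition reconfigures :: "(('v \<Rightarrow> nat) \<Rightarrow> bool) \<Rightarrow> 'v set \<Rightarrow> ('v \<Rightarrow> nat) \<Rightarrow> ('v \<Rightarrow> nat) \<Rightarrow> bool" where
  "reconfigures P V a b \<longleftrightarrow> P a \<and> P b \<and> (reconf_step P V)\<^sup>*\<^sup>* a b"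

text \<open>Cyclic interval [a,b] = {a, a+1, ..., b} modulo p, as a subset of {0..p-1}.\<close>
definition cint :: "nat \<Rightarrow> int \<Rightarrow> int \<Rightarrow> nat set" where
  "cint p a b = {j. j < p \<and> (int j - a) mod int p \<le> (b - a) mod int p}"

definition gamma :: "nat \<Rightarrow> nat \<Rightarrow> nat \<Rightarrow> nat" where
  "gamma q r i = (if i = 0 then 0 else i * q + r)"

text \<open>Vertices of G': original vertices, clique vertices y_i, and path vertices
  x_i^{ab} (X a b i) of the path P_ab.\<close>
datatype 'v gvert = Orig 'v | Yv nat | Xv 'v 'v nat

definition Gp_V :: "nat \<Rightarrow> nat \<Rightarrow> 'v set \<Rightarrow> ('v \<Rightarrow> 'v \<Rightarrow> bool) \<Rightarrow> 'v gvert set" where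
  "Gp_V p t V E = Orig ` V \<union> Yv ` {..<p} \<union> {Xv a b i | a b i. E a b \<and> i \<le> t}"

fun Gp_base :: "nat \<Rightarrow> nat \<Rightarrow> nat \<Rightarrow> ('v \<Rightarrow> 'v \<Rightarrow> bool) \<Rightarrow> 'v gvert \<Rightarrow> 'v gvert \<Rightarrow> bool" where
  "Gp_base p q t E (Orig u) (Orig v) = E u v"
| "Gp_base p q t E (Yv i) (Yv j) = (i < p \<and> j < p \<and>
      int q \<le> \<bar>int i - int j\<bar> \<and> \<bar>int i - int j\<bar> \<le> int p - int q)"
| "Gp_base p q t E (Orig u) (Xv a b i) = (E a b \<and> ((u = a \<and> i = 0) \<or> (u = b \<and> i = t)))"
| "Gp_base p q t E (Xv a b i) (Xv a' b' i') = (E a b \<and> a' = a \<and> b' = b \<and> i < t \<and> i' = i + 1)"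
| "Gp_base p q t E (Xv a b i) (Yv j) = (E a b \<and> i \<le> t \<and> j < p \<and>
      (if i = 0 \<or> i = t then j \<in> cint p (3 * int q - 1) (int p - int q - 1)
       else j \<in> cint p ((int i + 3) * int q - 1) ((int i - 1) * int q)))"
| "Gp_base p q t E _ _ = False"

definition Gp_E :: "nat \<Rightarrow> nat \<Rightarrow> nat \<Rightarrow> ('v \<Rightarrow> 'v \<Rightarrow> bool) \<Rightarrow> 'v gvert \<Rightarrow> 'v gvert \<Rightarrow> bool" where
  "Gp_E p q t E x y \<longleftrightarrow> Gp_base p q t E x y \<or> Gp_base p q t E y x"

text \<open>The colouring alpha (resp. beta) of G' built from a colouring c = gamma o f.\<close>
fun Gp_col :: "nat \<Rightarrow> nat \<Rightarrow> nat \<Rightarrow> ('v \<Rightarrow> nat) \<Rightarrow> 'v gvert \<Rightarrow> nat" where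
  "Gp_col p q t c (Orig v) = c v"
| "Gp_col p q t c (Yv i) = i"
| "Gp_col p q t c (Xv a b i) =
     (if c a = 0 then ((i + 1) * q) mod p
      else if c b = 0 then (if i < t then (i * q) mod p else q)
      else (if i < t then (i * q) mod p else 0))"

end

theory Submission
  imports Defs
begin

text \<open>
  Along any reconfiguration sequence starting at \<open>\<alpha>\<close> the clique keeps its colouring
  \<open>y\<^sub>j \<mapsto> j\<close>: the neighbours of \<open>y\<^sub>i\<close> in the clique carry every colour at circular
  distance at least \<open>q\<close> from \<open>i\<close>, and the only colour at distance at least \<open>q\<close> from all of
  them is \<open>i\<close> itself. With the clique fixed, each path vertex \<open>x\<^sub>i\<^sup>a\<^sup>b\<close> is confined to a
  window of \<open>2q\<close> colours starting at \<open>iq\<close>, and following the path from \<open>a\<close> to \<open>b\<close> shows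
  that two adjacent vertices of \<open>G\<close> cannot both receive colours below \<open>q + r\<close>.
  Consequently the projection \<open>c \<mapsto> 0\<close> for \<open>c < q + r\<close> and \<open>c \<mapsto> (c - r) div q\<close> otherwise
  turns every colouring of the sequence into a proper \<open>k\<close>-colouring of \<open>G\<close>; it sends
  \<open>\<gamma>(i)\<close> to \<open>i\<close>, and recolouring one vertex of \<open>G'\<close> recolours at most one vertex of \<open>G\<close>.
\<close>

definition pq_apart :: "nat \<Rightarrow> nat \<Rightarrow> nat \<Rightarrow> nat \<Rightarrow> bool" where
  "pq_apart p q x y \<longleftrightarrow> int q \<le> \<bar>int x - int y\<bar> \<and> \<bar>int x - int y\<bar> \<le> int p - int q"

lemma pq_apart_commute: "pq_apart p q x y \<longleftrightarrow> pq_apart p q y x"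
  unfolding pq_apart_def by linarith

lemma pq_col_less: "pq_col p q V E c \<Longrightarrow> v \<in> V \<Longrightarrow> c v < p"
  unfolding pq_col_def by blast

lemma pq_col_apart: "pq_col p q V E c \<Longrightarrow> u \<in> V \<Longrightarrow> v \<in> V \<Longrightarrow> E u v \<Longrightarrow> pq_apart p q (c u) (c v)"
  unfolding pq_col_def pq_apart_def by blast

lemma pq_apart_iff_mod:
  assumes "x < p" "y < p"
  shows "pq_apart p q x y \<longleftrightarrow>
    int q \<le> (int x - int y) mod int p \<and> (int x - int y) mod int p \<le> int p - int q"
proof (cases "y \<le> x")
  case True
  then have "(int x - int y) mod int p = int x - int y"
    using assms by (intro mod_pos_pos_trivial) auto
  with True show ?thesis unfolding pq_apart_def by auto
next
  case False
  then have "(int x - int y) mod int p = int x - int y + int p"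
    using assms by (subst mod_pos_pos_trivial[symmetric, of _ "int p"]) (auto simp: mod_add_self2)
  with False show ?thesis unfolding pq_apart_def by auto
qed

lemma not_pq_apart_mod_close:
  assumes "x < p" "y < p" "q \<le> p" "(int x - int y) mod int p = d mod int p" "\<bar>d\<bar> < int q"
  shows "\<not> pq_apart p q x y"
proof (cases "0 \<le> d")
  case True
  then have "d mod int p = d" using assms by (intro mod_pos_pos_trivial) auto
  then show ?thesis using assms True by (simp add: pq_apart_iff_mod)
next
  case False
  then have "d mod int p = d + int p"
    using assms by (subst mod_pos_pos_trivial[symmetric, of _ "int p"]) auto
  then show ?thesis using assms False by (simp add: pq_apart_iff_mod)
qed

lemma pq_apart_window_gap:
  fixes p q c :: nat and b lo hi :: int
  assumes "0 < q" "q \<le> p" "0 \<le> lo" "lo \<le> hi" "hi < int p" "c < p"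
    and apart: "\<And>j. j < p \<Longrightarrow> lo \<le> (int j - b) mod int p \<Longrightarrow> (int j - b) mod int p \<le> hi \<Longrightarrow>
      pq_apart p q c j"
  shows "(int c - b) mod int p \<le> lo - int q \<or> hi + int q \<le> (int c - b) mod int p"
proof (rule ccontr)
  assume gap: "\<not> ?thesis"
  define s where "s = (int c - b) mod int p"
  define m where "m = max lo (min hi s)"
  define j where "j = nat ((b + m) mod int p)"
  have j: "int j = (b + m) mod int p" and "j < p"
    using assms unfolding j_def by (simp_all add: nat_less_iff)
  have "0 \<le> m" "m < int p" unfolding m_def using assms by auto
  then have "(int j - b) mod int p = m"
    unfolding j by (simp add: mod_diff_left_eq mod_pos_pos_trivial)
  then have "pq_apart p q c j"
    using apart[OF \<open>j < p\<close>] assms unfolding m_def by simp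
  moreover have "(int c - int j) mod int p = (s - m) mod int p"
    unfolding j s_def by (metis diff_diff_eq mod_diff_eq mod_diff_left_eq)
  moreover have "\<bar>s - m\<bar> < int q"
    using gap assms(1) unfolding m_def s_def by (auto simp: max_def min_def abs_if)
  ultimately show False
    using not_pq_apart_mod_close[OF \<open>c < p\<close> \<open>j < p\<close> \<open>q \<le> p\<close>] by blast
qed

lemma eq_if_pq_apart_from_all_apart:
  assumes "0 < q" "2 * q \<le> p" "c < p" "i < p"
    and apart: "\<And>j. j < p \<Longrightarrow> pq_apart p q j i \<Longrightarrow> pq_apart p q c j"
  shows "c = i"
proof -
  have "(int c - int i) mod int p \<le> 0 \<or> int p \<le> (int c - int i) mod int p"
    using pq_apart_window_gap[OF assms(1) _ _ _ _ \<open>c < p\<close>, of "int q" "int p - int q" "int i"]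
      apart assms(1,2,4) by (fastforce simp: pq_apart_iff_mod)
  moreover have "0 \<le> (int c - int i) mod int p" "(int c - int i) mod int p < int p"
    using \<open>i < p\<close> by simp_all
  ultimately have "int c mod int p = int i mod int p"
    by (simp add: mod_eq_dvd_iff dvd_eq_mod_eq_0)
  then show ?thesis using assms(3,4) by simp
qed

lemma mem_cint_iff_window:
  fixes lo hi b a e :: int
  assumes "0 \<le> lo" "lo \<le> hi" "hi < int p"
    and "a mod int p = (b + lo) mod int p" "e mod int p = (b + hi) mod int p"
  shows "j \<in> cint p a e \<longleftrightarrow> j < p \<and> lo \<le> (int j - b) mod int p \<and> (int j - b) mod int p \<le> hi"
proof -
  define s where "s = (int j - b) mod int p"
  have p: "0 < int p" using assms by linarith
  have "(int j - a) mod int p = (int j - (b + lo)) mod int p"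
    by (metis assms(4) mod_diff_right_eq)
  also have "\<dots> = (s - lo) mod int p"
    unfolding s_def by (simp add: mod_diff_left_eq diff_diff_eq)
  finally have ja: "(int j - a) mod int p = (s - lo) mod int p" .
  have "(e - a) mod int p = ((b + hi) - (b + lo)) mod int p"
    by (metis assms(4,5) mod_diff_eq)
  then have ea: "(e - a) mod int p = hi - lo"
    using assms by (simp add: mod_pos_pos_trivial)
  have s: "0 \<le> s" "s < int p" unfolding s_def using p by simp_all
  have "(s - lo) mod int p \<le> hi - lo \<longleftrightarrow> lo \<le> s \<and> s \<le> hi"
  proof (cases "lo \<le> s")
    case True
    then show ?thesis using s assms by (simp add: mod_pos_pos_trivial)
  next
    case False
    then have "(s - lo) mod int p = s - lo + int p"
      using s assms by (subst mod_pos_pos_trivial[symmetric, of _ "int p"]) auto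
    then show ?thesis using False s assms by simp
  qed
  moreover have "j \<in> cint p a e \<longleftrightarrow> j < p \<and> (s - lo) mod int p \<le> hi - lo"
    unfolding cint_def using ja ea by simp
  ultimately show ?thesis unfolding s_def by blast
qed

lemma pq_apart_path_offsets:
  fixes p q n A :: nat and c :: "nat \<Rightarrow> nat"
  assumes "q \<le> p" "A + 1 < q"
    and c_less: "\<And>i. i \<le> n \<Longrightarrow> c i < p"
    and start: "c 0 < 2 * q \<or> c 0 = p - 1"
    and inner: "\<And>i. 0 < i \<Longrightarrow> i \<le> n \<Longrightarrow> (int (c i) - int i * int q) mod int p < 2 * int q"
    and apart_A: "pq_apart p q A (c 0)"
    and apart_path: "\<And>i. i < n \<Longrightarrow> pq_apart p q (c i) (c (Suc i))"
    and "i \<le> n"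
  shows "int A + int q \<le> (int (c i) - int i * int q) mod int p
    \<and> (int (c i) - int i * int q) mod int p < 2 * int q"
  using \<open>i \<le> n\<close>
proof (induction i)
  case 0
  have "c 0 \<noteq> p - 1"
  proof
    assume "c 0 = p - 1"
    then have "int A - int (c 0) = (int A + 1) - int p" using c_less[of 0] by (simp add: of_nat_diff)
    then have "(int A - int (c 0)) mod int p = (int A + 1) mod int p"
      by (metis minus_mod_self2)
    then show False
      using not_pq_apart_mod_close[of A p "c 0" q "int A + 1"] c_less[of 0] \<open>q \<le> p\<close> apart_A \<open>A + 1 < q\<close>
      by simp
  qed
  then show ?case using start apart_A \<open>A + 1 < q\<close> c_less[of 0] unfolding pq_apart_def by auto
next
  case (Suc i)
  define s where "s j = (int (c j) - int j * int q) mod int p" for j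
  have IH: "int A + int q \<le> s i \<and> s i < 2 * int q" using Suc unfolding s_def by auto
  have "0 \<le> s (Suc i)" unfolding s_def using c_less[of 0] by simp
  have "s (Suc i) < 2 * int q" using inner[of "Suc i"] Suc.prems unfolding s_def by auto
  \<comment> \<open>A decrease of the offset would bring two consecutive path colours within \<open>q\<close> of each
    other modulo \<open>p\<close>.\<close>
  moreover have "s i \<le> s (Suc i)"
  proof (rule ccontr)
    assume "\<not> s i \<le> s (Suc i)"
    then have close: "\<bar>int q + s (Suc i) - s i\<bar> < int q" using IH \<open>0 \<le> s (Suc i)\<close> by linarith
    have "(int q + s (Suc i) - s i) mod int p
        = (int q + (int (c (Suc i)) - int (Suc i) * int q) - (int (c i) - int i * int q)) mod int p"
      unfolding s_def by (intro mod_diff_cong mod_add_cong) simp_all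
    then have "(int (c (Suc i)) - int (c i)) mod int p = (int q + s (Suc i) - s i) mod int p"
      by (simp add: algebra_simps)
    moreover have "pq_apart p q (c (Suc i)) (c i)"
      using apart_path[of i] pq_apart_commute Suc.prems by auto
    ultimately show False
      using not_pq_apart_mod_close[of "c (Suc i)" p "c i" q] close c_less[of i] c_less[of "Suc i"]
        \<open>q \<le> p\<close> Suc.prems
      by auto
  qed
  ultimately show ?case using IH unfolding s_def by auto
qed

lemma pq_apart_path_impossible:
  fixes p q r t A B :: nat and c :: "nat \<Rightarrow> nat"
  assumes "0 < t" "q \<le> p" "((t + 1) * q) mod p = r" "r < q"
    and AB: "A + q \<le> B" "B < q + r"
    and c_less: "\<And>i. i \<le> t \<Longrightarrow> c i < p"
    and ends: "c 0 < 2 * q \<or> c 0 = p - 1" "c t < 2 * q \<or> c t = p - 1"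
    and inner: "\<And>i. 0 < i \<Longrightarrow> i < t \<Longrightarrow> (int (c i) - int i * int q) mod int p < 2 * int q"
    and apart_A: "pq_apart p q A (c 0)" and apart_B: "pq_apart p q B (c t)"
    and apart_path: "\<And>i. i < t \<Longrightarrow> pq_apart p q (c i) (c (Suc i))"
  shows False
proof -
  define u where "u = t - 1"
  have t: "t = Suc u" using \<open>0 < t\<close> unfolding u_def by auto
  have c_less_t: "c t < p" and c_less_u: "c u < p" using c_less t by auto
  define s where "s = (int (c u) - int u * int q) mod int p"
  have s: "int A + int q \<le> s \<and> s < 2 * int q"
    unfolding s_def
    by (rule pq_apart_path_offsets[of q p A u c])
      (use \<open>q \<le> p\<close> AB \<open>r < q\<close> t c_less ends(1) inner apart_A apart_path in auto)
  \<comment> \<open>Since \<open>(t + 1) q \<equiv> r\<close>, the last inner colour is \<open>r - 2q + s\<close> modulo \<open>p\<close>; this pushes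
    \<open>c t\<close> up to at least \<open>r + A\<close>, which is within \<open>q\<close> of \<open>B\<close>.\<close>
  have "(int (c u)) mod int p = (s + int ((t + 1) * q) - 2 * int q) mod int p"
    unfolding s_def t by (simp add: mod_simps algebra_simps)
  then have c_u: "(int (c u)) mod int p = (s + int r - 2 * int q) mod int p"
    using assms(3) by (metis mod_diff_left_eq mod_add_right_eq of_nat_mod)
  have "(int (c t) - int (c u)) mod int p = (int (c t) - (s + int r - 2 * int q)) mod int p"
    by (rule mod_diff_cong[OF refl c_u])
  then have diff: "(int (c t) - int (c u)) mod int p = (int (c t) - int r + 2 * int q - s) mod int p"
    by (simp add: algebra_simps)
  have apart_last: "pq_apart p q (c t) (c u)" using apart_path[of u] pq_apart_commute t by auto
  have "c t \<noteq> p - 1"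
  proof
    assume "c t = p - 1"
    then have "int (c t) - int r + 2 * int q - s = (2 * int q - 1 - int r - s) + int p"
      using c_less_t by (simp add: of_nat_diff)
    then have "(int (c t) - int (c u)) mod int p = (2 * int q - 1 - int r - s) mod int p"
      using diff by (metis mod_add_self2)
    moreover have "\<bar>2 * int q - 1 - int r - s\<bar> < int q" using s \<open>r < q\<close> by linarith
    ultimately show False using not_pq_apart_mod_close[OF c_less_t c_less_u \<open>q \<le> p\<close>] apart_last by blast
  qed
  then have c_t: "c t < 2 * q" using ends(2) by blast
  have "int r - int q + s \<le> int (c t)"
  proof (rule ccontr)
    assume "\<not> ?thesis"
    then have "\<bar>int (c t) - int r + 2 * int q - s\<bar> < int q" using s \<open>r < q\<close> c_t by linarith
    then show False using not_pq_apart_mod_close[OF c_less_t c_less_u \<open>q \<le> p\<close> diff] apart_last by blast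
  qed
  then show False using apart_B AB c_t s unfolding pq_apart_def by linarith
qed

lemma ex_pos_succ_mult_mod_eq_rem:
  fixes p q :: nat
  assumes "0 < q" "2 * q \<le> p" "r = p mod q" "0 < r"
  shows "\<exists>t>0. ((t + 1) * q) mod p = r"
proof -
  define k where "k = p div q"
  have p: "p = k * q + r" unfolding k_def assms(3) by simp
  have "2 \<le> q" using assms(3,4) mod_less_divisor[OF \<open>0 < q\<close>, of p] by linarith
  then have "2 * k \<le> k * q" by simp
  moreover have "2 \<le> k" unfolding k_def using div_le_mono[OF \<open>2 * q \<le> p\<close>, of q] \<open>0 < q\<close> by simp
  ultimately have k: "k + 1 < p" using p by linarith
  have "(p - k) * q = p * q - k * q" by (simp add: diff_mult_distrib)
  also have "\<dots> = p * (q - 1) + r" using p \<open>0 < q\<close> by (cases q) auto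
  finally have "((p - k - 1 + 1) * q) mod p = r mod p"
    using k by (simp add: Suc_diff_Suc)
  also have "r mod p = r"
    using assms(1-3) mod_less_divisor[OF \<open>0 < q\<close>, of p] by (intro mod_less) linarith
  finally show ?thesis using k by (intro exI[of _ "p - k - 1"]) auto
qed

lemma div_eq_imp_less_add:
  fixes x y q :: nat
  assumes "x div q = y div q" "0 < q"
  shows "x < y + q"
proof -
  have "x = y div q * q + x mod q" using assms(1) by (metis div_mult_mod_eq)
  moreover have "x mod q < q" using \<open>0 < q\<close> by simp
  moreover have "y div q * q \<le> y" by (rule div_times_less_eq_dividend)
  ultimately show ?thesis using assms(1) by linarith
qed

definition colour_class :: "nat \<Rightarrow> nat \<Rightarrow> nat \<Rightarrow> nat" where
  "colour_class q r c = (if c < q + r then 0 else (c - r) div q)"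

lemma colour_class_less:
  assumes "0 < q" "0 < k" "p = k * q + r" "c < p"
  shows "colour_class q r c < k"
proof (cases "c < q + r")
  case True
  with \<open>0 < k\<close> show ?thesis unfolding colour_class_def by simp
next
  case False
  then have "c - r < k * q" using assms by linarith
  with False show ?thesis unfolding colour_class_def by (simp add: less_mult_imp_div_less)
qed

lemma colour_class_gamma: "0 < q \<Longrightarrow> colour_class q r (gamma q r i) = i"
  unfolding colour_class_def gamma_def by auto

lemma colour_class_eq_imp_low:
  assumes "0 < q" "colour_class q r x = colour_class q r y" "int q \<le> \<bar>int x - int y\<bar>"
  shows "x < q + r \<and> y < q + r"
proof -
  have high_class: "0 < colour_class q r z" if "\<not> z < q + r" for z
    using that assms(1) unfolding colour_class_def by (auto simp: div_greater_zero_iff)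
  have "\<not> (\<not> x < q + r \<and> \<not> y < q + r)"
  proof
    assume high: "\<not> x < q + r \<and> \<not> y < q + r"
    then have "(x - r) div q = (y - r) div q" using assms(2) unfolding colour_class_def by simp
    then have "x - r < y - r + q" "y - r < x - r + q"
      using div_eq_imp_less_add assms(1) by metis+
    with high assms(3) show False by linarith
  qed
  then show ?thesis using high_class assms(2) unfolding colour_class_def by (metis neq0_conv)
qed

lemma rtranclp_reconf_step_simulation:
  assumes step: "\<And>\<phi> \<psi>. I \<phi> \<Longrightarrow> reconf_step P V \<phi> \<psi> \<Longrightarrow> I \<psi> \<and> reconf_step Q W (F \<phi>) (F \<psi>)"
    and "(reconf_step P V)\<^sup>*\<^sup>* a b" "I a"
  shows "I b \<and> (reconf_step Q W)\<^sup>*\<^sup>* (F a) (F b)"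
  using assms(2)
proof (induction rule: rtranclp_induct)
  case base
  then show ?case using \<open>I a\<close> by simp
next
  case (step \<phi> \<psi>)
  then show ?case using assms(1) by (meson rtranclp.rtrancl_into_rtrancl)
qed

lemma Gp_V_simps [simp]:
  "Orig v \<in> Gp_V p t V E \<longleftrightarrow> v \<in> V"
  "Yv j \<in> Gp_V p t V E \<longleftrightarrow> j < p"
  "Xv a b i \<in> Gp_V p t V E \<longleftrightarrow> E a b \<and> i \<le> t"
  unfolding Gp_V_def by auto

locale recolouring_gadget =
  fixes p q r t k :: nat and V :: "'v set" and E :: "'v \<Rightarrow> 'v \<Rightarrow> bool"
  assumes q_pos: "0 < q" and four_q_le: "4 * q \<le> p" and r_less: "r < q"
    and p_eq: "p = k * q + r"
    and t_pos: "0 < t" and t_mod: "((t + 1) * q) mod p = r"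
    and graph: "graph V E"
begin

abbreviation "V' \<equiv> Gp_V p t V E"
abbreviation "E' \<equiv> Gp_E p q t E"
abbreviation "pq_col' \<equiv> pq_col p q V' E'"

definition y_fixed :: "('v gvert \<Rightarrow> nat) \<Rightarrow> bool" where
  "y_fixed \<phi> \<longleftrightarrow> (\<forall>j<p. \<phi> (Yv j) = j)"

definition class_colouring :: "('v gvert \<Rightarrow> nat) \<Rightarrow> 'v \<Rightarrow> nat" where
  "class_colouring \<phi> v = colour_class q r (\<phi> (Orig v))"

lemma y_fixed_reconf_step:
  assumes "y_fixed \<phi>" "reconf_step pq_col' V' \<phi> \<psi>"
  shows "y_fixed \<psi>"
  unfolding y_fixed_def
proof (intro allI impI)
  fix i assume "i < p"
  from assms(2) obtain w where col: "pq_col' \<psi>" and same: "\<forall>v\<in>V'. v \<noteq> w \<longrightarrow> \<phi> v = \<psi> v"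
    unfolding reconf_step_def by blast
  have fixed_off_w: "\<psi> (Yv j) = j" if "j < p" "Yv j \<noteq> w" for j
    using assms(1) same that unfolding y_fixed_def by auto
  show "\<psi> (Yv i) = i"
  proof (cases "w = Yv i")
    case False
    then show ?thesis using fixed_off_w[OF \<open>i < p\<close>] by auto
  next
    case True
    define c where "c = \<psi> (Yv i)"
    have "c < p" unfolding c_def using pq_col_less[OF col] \<open>i < p\<close> by simp
    have "pq_apart p q c j" if "j < p" "pq_apart p q j i" for j
    proof -
      have "E' (Yv i) (Yv j)" and "j \<noteq> i"
        using that \<open>i < p\<close> q_pos pq_apart_commute unfolding Gp_E_def pq_apart_def by auto
      then have "pq_apart p q (\<psi> (Yv i)) (\<psi> (Yv j))"
        using pq_col_apart[OF col] that \<open>i < p\<close> by simp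
      then show ?thesis using fixed_off_w[of j] that True \<open>j \<noteq> i\<close> unfolding c_def by simp
    qed
    then show ?thesis
      using eq_if_pq_apart_from_all_apart[OF q_pos _ \<open>c < p\<close> \<open>i < p\<close>] four_q_le unfolding c_def by simp
  qed
qed

lemma path_vertex_apart_clique:
  assumes "pq_col' \<phi>" "y_fixed \<phi>" "Gp_base p q t E (Xv a b i) (Yv j)"
  shows "pq_apart p q (\<phi> (Xv a b i)) j"
proof -
  have "E a b" "i \<le> t" "j < p" using assms(3) by simp_all
  moreover have "E' (Xv a b i) (Yv j)" using assms(3) unfolding Gp_E_def by blast
  ultimately show ?thesis
    using pq_col_apart[OF assms(1), of "Xv a b i" "Yv j"] assms(2) unfolding y_fixed_def by simp
qed

lemma path_end_colour:
  assumes "pq_col' \<phi>" "y_fixed \<phi>" "E a b" "i = 0 \<or> i = t"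
  shows "\<phi> (Xv a b i) < 2 * q \<or> \<phi> (Xv a b i) = p - 1"
proof -
  let ?c = "\<phi> (Xv a b i)"
  have "i \<le> t" using assms(4) by auto
  then have "?c < p" using pq_col_less[OF assms(1)] assms(3) by simp
  have window: "j \<in> cint p (3 * int q - 1) (int p - int q - 1) \<longleftrightarrow>
      j < p \<and> 3 * int q - 1 \<le> (int j - 0) mod int p \<and> (int j - 0) mod int p \<le> int p - int q - 1" for j
    by (rule mem_cint_iff_window) (use q_pos four_q_le in auto)
  have "pq_apart p q ?c j"
    if "j < p" "3 * int q - 1 \<le> (int j - 0) mod int p" "(int j - 0) mod int p \<le> int p - int q - 1" for j
    using path_vertex_apart_clique[OF assms(1,2)] window[of j] that assms(3,4) \<open>i \<le> t\<close> by auto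
  then have "(int ?c - 0) mod int p \<le> 3 * int q - 1 - int q \<or> int p - int q - 1 + int q \<le> (int ?c - 0) mod int p"
    by (intro pq_apart_window_gap[OF q_pos _ _ _ _ \<open>?c < p\<close>]) (use q_pos four_q_le in auto)
  moreover have "(int ?c - 0) mod int p = int ?c" using \<open>?c < p\<close> by simp
  ultimately show ?thesis using \<open>?c < p\<close> by linarith
qed

lemma path_inner_colour:
  assumes "pq_col' \<phi>" "y_fixed \<phi>" "E a b" "0 < i" "i < t"
  shows "(int (\<phi> (Xv a b i)) - int i * int q) mod int p < 2 * int q"
proof -
  let ?c = "\<phi> (Xv a b i)" and ?b = "int i * int q"
  have "?c < p" using pq_col_less[OF assms(1)] assms(3,5) by simp
  have "?b + (int p - int q) = (int i - 1) * int q + int p" by (simp add: algebra_simps)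
  then have "((int i - 1) * int q) mod int p = (?b + (int p - int q)) mod int p"
    by (simp only: mod_add_self2)
  then have window: "j \<in> cint p ((int i + 3) * int q - 1) ((int i - 1) * int q) \<longleftrightarrow>
      j < p \<and> 3 * int q - 1 \<le> (int j - ?b) mod int p \<and> (int j - ?b) mod int p \<le> int p - int q" for j
    by (intro mem_cint_iff_window) (use q_pos four_q_le in \<open>auto simp: algebra_simps\<close>)
  have "pq_apart p q ?c j"
    if "j < p" "3 * int q - 1 \<le> (int j - ?b) mod int p" "(int j - ?b) mod int p \<le> int p - int q" for j
    using path_vertex_apart_clique[OF assms(1,2)] window[of j] that assms(3-5) by auto
  then have "(int ?c - ?b) mod int p \<le> 3 * int q - 1 - int q \<or> int p - int q + int q \<le> (int ?c - ?b) mod int p"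
    by (intro pq_apart_window_gap[OF q_pos _ _ _ _ \<open>?c < p\<close>]) (use q_pos four_q_le in auto)
  moreover have "(int ?c - ?b) mod int p < int p" using \<open>?c < p\<close> by simp
  ultimately show ?thesis by linarith
qed

lemma no_low_apart_edge:
  assumes "pq_col' \<phi>" "y_fixed \<phi>" "E a b"
  shows "\<not> (\<phi> (Orig a) + q \<le> \<phi> (Orig b) \<and> \<phi> (Orig b) < q + r)"
proof
  assume low: "\<phi> (Orig a) + q \<le> \<phi> (Orig b) \<and> \<phi> (Orig b) < q + r"
  have "a \<in> V" "b \<in> V" using graph \<open>E a b\<close> unfolding graph_def by auto
  show False
  proof (rule pq_apart_path_impossible[where c = "\<lambda>i. \<phi> (Xv a b i)"])
    show "0 < t" "q \<le> p" "((t + 1) * q) mod p = r" "r < q"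
      using t_pos four_q_le t_mod r_less by auto
    show "\<phi> (Orig a) + q \<le> \<phi> (Orig b)" "\<phi> (Orig b) < q + r" using low by auto
    show "\<phi> (Xv a b i) < p" if "i \<le> t" for i
      using pq_col_less[OF assms(1)] that assms(3) by simp
    show "\<phi> (Xv a b 0) < 2 * q \<or> \<phi> (Xv a b 0) = p - 1" "\<phi> (Xv a b t) < 2 * q \<or> \<phi> (Xv a b t) = p - 1"
      using path_end_colour[OF assms] by auto
    show "(int (\<phi> (Xv a b i)) - int i * int q) mod int p < 2 * int q" if "0 < i" "i < t" for i
      using path_inner_colour[OF assms that] .
    show "pq_apart p q (\<phi> (Orig a)) (\<phi> (Xv a b 0))" "pq_apart p q (\<phi> (Orig b)) (\<phi> (Xv a b t))"
      using pq_col_apart[OF assms(1)] \<open>a \<in> V\<close> \<open>b \<in> V\<close> assms(3) unfolding Gp_E_def by auto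
    show "pq_apart p q (\<phi> (Xv a b i)) (\<phi> (Xv a b (Suc i)))" if "i < t" for i
      using pq_col_apart[OF assms(1)] that assms(3) unfolding Gp_E_def by auto
  qed
qed

lemma k_col_class_colouring:
  assumes "pq_col' \<phi>" "y_fixed \<phi>"
  shows "k_col k V E (class_colouring \<phi>)"
  unfolding k_col_def
proof (intro conjI ballI impI)
  have "0 < k" using p_eq four_q_le r_less by (cases k) auto
  fix v assume "v \<in> V"
  then show "class_colouring \<phi> v < k"
    using colour_class_less[OF q_pos \<open>0 < k\<close> p_eq] pq_col_less[OF assms(1)]
    unfolding class_colouring_def by simp
next
  fix u v assume "u \<in> V" "v \<in> V" "E u v"
  then have "E v u" using graph unfolding graph_def by blast
  have "pq_apart p q (\<phi> (Orig u)) (\<phi> (Orig v))"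
    using pq_col_apart[OF assms(1)] \<open>u \<in> V\<close> \<open>v \<in> V\<close> \<open>E u v\<close> unfolding Gp_E_def by simp
  then have apart: "int q \<le> \<bar>int (\<phi> (Orig u)) - int (\<phi> (Orig v))\<bar>" unfolding pq_apart_def by simp
  show "class_colouring \<phi> u \<noteq> class_colouring \<phi> v"
  proof
    assume "class_colouring \<phi> u = class_colouring \<phi> v"
    then have "\<phi> (Orig u) < q + r \<and> \<phi> (Orig v) < q + r"
      using colour_class_eq_imp_low[OF q_pos _ apart] unfolding class_colouring_def by blast
    then show False
      using no_low_apart_edge[OF assms \<open>E u v\<close>] no_low_apart_edge[OF assms \<open>E v u\<close>] apart by linarith
  qed
qed

lemma reconf_step_class_colouring:
  assumes "y_fixed \<phi>" "reconf_step pq_col' V' \<phi> \<psi>"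
  shows "y_fixed \<psi> \<and> reconf_step (k_col k V E) V (class_colouring \<phi>) (class_colouring \<psi>)"
proof
  show "y_fixed \<psi>" using y_fixed_reconf_step[OF assms] .
  from assms(2) obtain w where col: "pq_col' \<phi>" "pq_col' \<psi>" and same: "\<forall>v\<in>V'. v \<noteq> w \<longrightarrow> \<phi> v = \<psi> v"
    unfolding reconf_step_def by blast
  obtain w' where "\<forall>v. v \<noteq> w' \<longrightarrow> Orig v \<noteq> w" by (cases w) auto
  then have "\<forall>v\<in>V. v \<noteq> w' \<longrightarrow> class_colouring \<phi> v = class_colouring \<psi> v"
    using same unfolding class_colouring_def by simp
  then show "reconf_step (k_col k V E) V (class_colouring \<phi>) (class_colouring \<psi>)"
    using k_col_class_colouring[OF col(1) assms(1)] k_col_class_colouring[OF col(2) \<open>y_fixed \<psi>\<close>]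
    unfolding reconf_step_def by blast
qed

lemma class_colouring_Gp_col: "class_colouring (Gp_col p q t (gamma q r \<circ> f)) = f"
  using colour_class_gamma[OF q_pos] unfolding class_colouring_def by auto

lemma y_fixed_Gp_col: "y_fixed (Gp_col p q t c)"
  unfolding y_fixed_def by simp

lemma reconfigures_if_gadget_reconfigures:
  assumes "k_col k V E f" "k_col k V E g"
    and "reconfigures pq_col' V' (Gp_col p q t (gamma q r \<circ> f)) (Gp_col p q t (gamma q r \<circ> g))"
  shows "reconfigures (k_col k V E) V f g"
proof -
  have "(reconf_step pq_col' V')\<^sup>*\<^sup>* (Gp_col p q t (gamma q r \<circ> f)) (Gp_col p q t (gamma q r \<circ> g))"
    using assms(3) unfolding reconfigures_def by blast
  then have "(reconf_step (k_col k V E) V)\<^sup>*\<^sup>* f g"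
    using rtranclp_reconf_step_simulation[of y_fixed, OF reconf_step_class_colouring]
      y_fixed_Gp_col class_colouring_Gp_col by metis
  then show ?thesis using assms(1,2) unfolding reconfigures_def by blast
qed

end

theorem proposition3p3:
  fixes p q k r t :: nat and V :: "'v set" and E :: "'v \<Rightarrow> 'v \<Rightarrow> bool" and f g :: "'v \<Rightarrow> nat"
  assumes "0 < q" and "4 * q \<le> p"
    and "k = p div q" and "r = p - k * q" and "1 \<le> r"
    and "t = (LEAST t. 0 < t \<and> ((t + 1) * q) mod p = r mod p)"
    and "graph V E"
    and "k_col k V E f" and "k_col k V E g"
    and "reconfigures (pq_col p q (Gp_V p t V E) (Gp_E p q t E)) (Gp_V p t V E)
           (Gp_col p q t (gamma q r \<circ> f)) (Gp_col p q t (gamma q r \<circ> g))"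
  shows "reconfigures (k_col k V E) V f g"
proof -
  have r: "r = p mod q" using assms(3,4) by (simp add: minus_div_mult_eq_mod)
  then have "r < q" using assms(1) by simp
  then have "r mod p = r" using assms(2) by (intro mod_less) linarith
  obtain t' where "0 < t'" "((t' + 1) * q) mod p = r mod p"
    using ex_pos_succ_mult_mod_eq_rem[OF assms(1) _ r] assms(1,2,5) \<open>r mod p = r\<close> by auto
  then have "0 < t \<and> ((t + 1) * q) mod p = r"
    unfolding assms(6) using \<open>r mod p = r\<close> by (metis (mono_tags, lifting) LeastI)
  then interpret recolouring_gadget p q r t k V E
    using assms(1-4,7) \<open>r < q\<close> by unfold_locales auto
  show ?thesis using reconfigures_if_gadget_reconfigures assms(8-10) .
qed

end
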